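(* Let $n\ge2$. The limit set $\Lambda\subset\mathrm{Iso}_2(\mathbb R^{2n},\omega_h)$ associated to $\mathrm{SU}(n-1,1)\subset\mathrm{Sp}(\omega_h)$, namely the set of complex lines $L\subset\mathbb C^n$ with $h|_{L}\equiv0$, viewed as real $2$-planes in $\mathbb R^{2n}$ (a space homeomorphic to $S^{2n-3}$), is maximally antipodal in $\mathrm{Iso}_2(\mathbb R^{2n},\omega_h)$.
   Context: $h(u,v)=\overline u^TQv$ is the Hermitian form on $\mathbb C^n$ of signature $(n-1,1)$ with $Qe_1=e_n$, $Qe_n=e_1$, $Qe_k=e_k$ for $1<k<n$; $\mathrm{SU}(n-1,1)$ is the subgroup of $\mathrm{SL}(n,\mathbb C)$ preserving $h$. $\mathbb C^n$ is identified with $\mathbb R^{2n}$ via $(x_1+iy_1,\dots,x_n+iy_n)\mapsto(x_1,y_1,\dots,x_n,y_n)$, and $\omega_h=\mathrm{Im}\,h$ is a real symplectic form preserved by $\mathrm{SU}(n-1,1)$; $\mathrm{Sp}(\omega_h)$ is its symmetry group. $\mathrm{Iso}_2(\mathbb R^{2n},\omega_h)$ is the space of $\omega_h$-isotropic real $2$-planes; $V,W$ are antipodal iff $V\oplus W^{\perp_{\omega_h}}=\mathbb R^{2n}$. A subset is maximally antipodal if its distinct points are pairwise antipodal and every point of the ambient space is non-antipodal to at least one of its points. ($\Lambda$ is the flag limit set of the rank one subgroup $\mathrm{SU}(n-1,1)$ in $\mathrm{Iso}_2$, equal to the limit set of any uniform lattice of $\mathrm{SU}(n-1,1)$.) *)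

theory Defs
  imports "HOL-Analysis.Analysis"
begin

text \<open>C^n is modelled as complex^('n::{finite,wellorder}), with the index type 'n finite and well-ordered:
  its least element plays the role of index 1, its greatest that of index n.
  complex^'n is a Euclidean (real) space of dimension 2n; its real structure is exactly
  the identification C^n = R^{2n}.\<close>

definition idx_first :: "'n::{finite,wellorder}" where
  "idx_first = (LEAST i. True)"

definition idx_last :: "'n::{finite,wellorder}" where
  "idx_last = (GREATEST i. True)"

definition Qperm :: "('n::{finite,wellorder}) \<Rightarrow> ('n::{finite,wellorder})" where
  "Qperm i = (if i = idx_first then idx_last else if i = idx_last then idx_first else i)"

definition Qmat :: "complex^('n::{finite,wellorder})^('n::{finite,wellorder})" where
  "Qmat = (\<chi> i j. if j = Qperm i then 1 else 0)"

definition herm :: "complex^('n::{finite,wellorder}) \<Rightarrow> complex^('n::{finite,wellorder}) \<Rightarrow> complex" where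
  "herm u v = (\<Sum>i\<in>UNIV. cnj (u $ i) * ((Qmat *v v) $ i))"

definition omega_h :: "complex^('n::{finite,wellorder}) \<Rightarrow> complex^('n::{finite,wellorder}) \<Rightarrow> real" where
  "omega_h u v = Im (herm u v)"

definition omega_isotropic :: "(complex^('n::{finite,wellorder})) set \<Rightarrow> bool" where
  "omega_isotropic V \<longleftrightarrow> (\<forall>u\<in>V. \<forall>v\<in>V. omega_h u v = 0)"

definition Iso2 :: "(complex^('n::{finite,wellorder})) set set" where
  "Iso2 = {V. subspace V \<and> dim V = 2 \<and> omega_isotropic V}"

definition omega_perp :: "(complex^('n::{finite,wellorder})) set \<Rightarrow> (complex^('n::{finite,wellorder})) set" where
  "omega_perp W = {u. \<forall>w\<in>W. omega_h u w = 0}"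

definition direct_sum_UNIV :: "('a::real_vector) set \<Rightarrow> 'a set \<Rightarrow> bool" where
  "direct_sum_UNIV V U \<longleftrightarrow> V \<inter> U = {0} \<and> {x + y | x y. x \<in> V \<and> y \<in> U} = UNIV"

definition antipodal :: "(complex^('n::{finite,wellorder})) set \<Rightarrow> (complex^('n::{finite,wellorder})) set \<Rightarrow> bool" where
  "antipodal V W \<longleftrightarrow> direct_sum_UNIV V (omega_perp W)"

definition maximally_antipodal ::
  "(complex^('n::{finite,wellorder})) set set \<Rightarrow> (complex^('n::{finite,wellorder})) set set \<Rightarrow> bool" where
  "maximally_antipodal X S \<longleftrightarrow>
     S \<subseteq> X \<and>
     (\<forall>V\<in>S. \<forall>W\<in>S. V \<noteq> W \<longrightarrow> antipodal V W) \<and>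
     (\<forall>V\<in>X. \<exists>W\<in>S. \<not> antipodal V W)"

definition complex_lines :: "(complex^('n::{finite,wellorder})) set set" where
  "complex_lines = {L. \<exists>v. v \<noteq> 0 \<and> L = range (\<lambda>c::complex. c *s v)}"

definition LimitSet :: "(complex^('n::{finite,wellorder})) set set" where
  "LimitSet = {L \<in> complex_lines. \<forall>u\<in>L. \<forall>v\<in>L. herm u v = 0}"

end

theory Submission
  imports Defs
begin

text \<open>On the hyperplane \<open>z\<^sub>1 = z\<^sub>n\<close> the form \<open>h\<close> is the standard positive definite one, so
  \<open>h\<close> has a single negative direction: two \<open>h\<close>-orthogonal vectors with \<open>h(x,x) \<le> 0\<close> are
  proportional. Hence two distinct null lines pair non-degenerately under \<open>h\<close>, which makes them
  antipodal. Conversely, \<open>\<omega>\<^sub>h\<close>-isotropy of a real plane \<open>V\<close> means that \<open>h\<close> is real on \<open>V\<close>, so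
  \<open>V\<close> has an \<open>h\<close>-orthogonal basis; a short case analysis on the signs of its vectors produces a
  nonzero \<open>p \<in> V\<close> and a null vector \<open>w\<close> with \<open>h(p,w) = 0\<close>, and then \<open>p\<close> lies in \<open>V\<close> and in the
  \<open>\<omega>\<^sub>h\<close>-orthogonal of the null line through \<open>w\<close>, so \<open>V\<close> is not antipodal to it.\<close>

abbreviation complex_line :: "complex^'n \<Rightarrow> (complex^'n) set" where
  "complex_line v \<equiv> range (\<lambda>c::complex. c *s v)"

lemma Qperm_Qperm [simp]: "Qperm (Qperm i) = i"
  by (auto simp: Qperm_def)

lemma herm_conv_sum: "herm u v = (\<Sum>i\<in>UNIV. cnj (u $ i) * v $ Qperm i)"
proof -
  have "(Qmat *v v) $ i = v $ Qperm i" for i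
    by (simp add: matrix_vector_mult_def Qmat_def if_distrib[of "\<lambda>a. a * _"] cong: if_cong)
  then show ?thesis
    by (simp add: herm_def)
qed

lemma herm_commute: "herm v u = cnj (herm u v)"
proof -
  have "herm v u = (\<Sum>i\<in>UNIV. cnj (v $ Qperm i) * u $ Qperm (Qperm i))"
    unfolding herm_conv_sum by (rule sum.reindex_bij_witness[where i=Qperm and j=Qperm]) auto
  also have "\<dots> = cnj (herm u v)"
    by (simp add: herm_conv_sum mult.commute)
  finally show ?thesis .
qed

lemma herm_self_real: "herm x x = complex_of_real (Re (herm x x))"
  using herm_commute[of x x] by (simp add: complex_eq_iff)

lemma scaleR_eq_smult: "r *\<^sub>R v = complex_of_real r *s (v::complex^'n)"
  unfolding vec_eq_iff vector_scaleR_component vector_smult_component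
  by (simp add: scaleR_conv_of_real)

lemma herm_add_left [simp]: "herm (u + w) v = herm u v + herm w v"
  and herm_add_right [simp]: "herm u (v + w) = herm u v + herm u w"
  and herm_diff_left [simp]: "herm (u - w) v = herm u v - herm w v"
  and herm_diff_right [simp]: "herm u (v - w) = herm u v - herm u w"
  and herm_smult_left [simp]: "herm (c *s u) v = cnj c * herm u v"
  and herm_smult_right [simp]: "herm u (c *s v) = c * herm u v"
  and herm_scaleR_left [simp]: "herm (r *\<^sub>R u) v = r * herm u v"
  and herm_scaleR_right [simp]: "herm u (r *\<^sub>R v) = r * herm u v"
  by (simp_all add: herm_conv_sum sum.distrib sum_subtractf sum_distrib_left
      scaleR_eq_smult algebra_simps)

lemma herm_zero_left [simp]: "herm 0 v = 0"
  and herm_zero_right [simp]: "herm u 0 = 0"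
  by (simp_all add: herm_conv_sum)

lemma herm_self_eq_norm_square:
  assumes "\<And>i. z $ Qperm i = z $ i"
  shows "herm z z = complex_of_real ((norm z)\<^sup>2)"
proof -
  have "herm z z = (\<Sum>i\<in>UNIV. z $ i * cnj (z $ i))"
    by (simp add: herm_conv_sum assms mult.commute)
  also have "\<dots> = complex_of_real (\<Sum>i\<in>UNIV. (cmod (z $ i))\<^sup>2)"
    by (simp only: of_real_sum complex_norm_square)
  also have "\<dots> = complex_of_real ((norm z)\<^sup>2)"
    by (simp add: norm_vec_def L2_set_def sum_nonneg)
  finally show ?thesis .
qed

lemma herm_self_eq_minus_norm_square:
  assumes "\<And>i. z $ Qperm i = - z $ i"
  shows "herm z z = - complex_of_real ((norm z)\<^sup>2)"
proof -
  have "herm z z = - (\<Sum>i\<in>UNIV. z $ i * cnj (z $ i))"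
    by (simp add: herm_conv_sum assms mult.commute sum_negf)
  also have "\<dots> = - complex_of_real (\<Sum>i\<in>UNIV. (cmod (z $ i))\<^sup>2)"
    by (simp only: of_real_sum complex_norm_square)
  also have "\<dots> = - complex_of_real ((norm z)\<^sup>2)"
    by (simp add: norm_vec_def L2_set_def sum_nonneg)
  finally show ?thesis .
qed

definition first_minus_last :: "complex^('n::{finite,wellorder}) \<Rightarrow> complex" where
  "first_minus_last z = z $ idx_first - z $ idx_last"

lemma first_minus_last_nonzero:
  assumes "Re (herm y y) \<le> 0" "y \<noteq> 0"
  shows "first_minus_last y \<noteq> 0"
proof
  assume "first_minus_last y = 0"
  then have "y $ Qperm i = y $ i" for i
    by (auto simp: first_minus_last_def Qperm_def)
  then have "Re (herm y y) = (norm y)\<^sup>2"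
    by (simp add: herm_self_eq_norm_square)
  with assms show False
    by simp
qed

text \<open>The combination \<open>z\<close> below satisfies \<open>z\<^sub>1 = z\<^sub>n\<close>, where \<open>h\<close> is positive definite.\<close>

lemma nonpositive_orthogonal_imp_proportional:
  assumes x: "Re (herm x x) \<le> 0" and y: "Re (herm y y) \<le> 0" and "herm x y = 0" "y \<noteq> 0"
  obtains c where "x = c *s y"
proof -
  define a where "a = first_minus_last y"
  define b where "b = first_minus_last x"
  define z where "z = a *s x - b *s y"
  have "z $ Qperm i = z $ i" for i
    by (auto simp: z_def a_def b_def first_minus_last_def Qperm_def algebra_simps)
  then have z_norm: "Re (herm z z) = (norm z)\<^sup>2"
    by (simp add: herm_self_eq_norm_square)
  have "herm y x = 0"
    using \<open>herm x y = 0\<close> herm_commute[of y x] by simp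
  then have "herm z z = (cnj a * a) * herm x x + (cnj b * b) * herm y y"
    using \<open>herm x y = 0\<close> by (simp add: z_def algebra_simps)
  then have "Re (herm z z) = (cmod a)\<^sup>2 * Re (herm x x) + (cmod b)\<^sup>2 * Re (herm y y)"
    by (simp add: mult.commute[of "cnj _"] flip: complex_norm_square)
  also have "\<dots> \<le> 0"
    using x y by (simp add: add_nonpos_nonpos mult_nonneg_nonpos)
  finally have "z = 0"
    using z_norm by simp
  moreover have "a \<noteq> 0"
    unfolding a_def using first_minus_last_nonzero y \<open>y \<noteq> 0\<close> .
  ultimately have "x = (b / a) *s y"
    by (simp add: z_def vec_eq_iff field_simps)
  then show ?thesis ..
qed

lemma null_orthogonal_imp_proportional:
  assumes "herm x x = 0" "herm y y = 0" "herm x y = 0" "y \<noteq> 0"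
  obtains c where "x = c *s y"
  by (rule nonpositive_orthogonal_imp_proportional[of x y]) (simp_all add: assms)

lemma orthogonal_to_timelike_imp_spacelike:
  assumes "Re (herm t t) < 0" "herm t y = 0" "y \<noteq> 0"
  shows "Re (herm y y) > 0"
proof (rule ccontr)
  assume "\<not> Re (herm y y) > 0"
  then obtain c where "t = c *s y"
    using nonpositive_orthogonal_imp_proportional[of t y] assms by force
  then have "herm t t = cnj c * cnj (herm t y)"
    by (simp flip: herm_commute)
  with assms show False
    by simp
qed

lemma idx_first_ne_idx_last:
  assumes "CARD('n::{finite,wellorder}) \<ge> 2"
  shows "(idx_first::'n) \<noteq> idx_last"
proof
  assume eq: "(idx_first::'n) = idx_last"
  have last: "idx_last = (Max UNIV :: 'n)"
    unfolding idx_last_def by (rule Greatest_equality) auto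
  have "idx_first \<le> i" "i \<le> idx_last" for i :: 'n
    by (simp_all add: idx_first_def Least_le last)
  then have "i = idx_first" for i :: 'n
    using eq antisym by metis
  then have "(UNIV::'n set) = {idx_first}"
    by auto
  then have "CARD('n) = 1"
    by (auto simp: card_1_singleton_iff)
  with assms show False
    by simp
qed

lemma exists_timelike:
  assumes "CARD('n) \<ge> 2"
  obtains u :: "complex^('n::{finite,wellorder})" where "Re (herm u u) < 0"
proof
  define u :: "complex^('n::{finite,wellorder})"
    where "u = (\<chi> i. if i = idx_first then 1 else if i = idx_last then -1 else 0)"
  have "u $ Qperm i = - u $ i" for i
    using idx_first_ne_idx_last[OF assms] by (auto simp: u_def Qperm_def)
  then have "Re (herm u u) = - (norm u)\<^sup>2"
    by (simp add: herm_self_eq_minus_norm_square)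
  moreover have "u \<noteq> 0"
    by (auto simp: u_def vec_eq_iff)
  ultimately show "Re (herm u u) < 0"
    by simp
qed

lemma null_combination:
  assumes "Re (herm x x) > 0" "Re (herm t t) < 0" "herm x t = 0"
  obtains a b :: real where "a *\<^sub>R x + b *\<^sub>R t \<noteq> 0" "herm (a *\<^sub>R x + b *\<^sub>R t) (a *\<^sub>R x + b *\<^sub>R t) = 0"
proof
  define X where "X = Re (herm x x)"
  define T where "T = Re (herm t t)"
  have hx: "herm x x = X" and ht: "herm t t = T"
    unfolding X_def T_def by (rule herm_self_real)+
  define a where "a = sqrt (- T)"
  define b where "b = sqrt X"
  have a: "a\<^sup>2 = - T" "a > 0" and b: "b\<^sup>2 = X"
    using assms by (simp_all add: a_def b_def X_def T_def)
  have "herm t x = 0"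
    using assms(3) herm_commute[of t x] by simp
  then have "herm (a *\<^sub>R x + b *\<^sub>R t) (a *\<^sub>R x + b *\<^sub>R t) = complex_of_real (a\<^sup>2 * X + b\<^sup>2 * T)"
    by (simp add: hx ht assms(3) power2_eq_square)
  also have "\<dots> = 0"
    using a b by simp
  finally show "herm (a *\<^sub>R x + b *\<^sub>R t) (a *\<^sub>R x + b *\<^sub>R t) = 0" .
  have "herm x (a *\<^sub>R x + b *\<^sub>R t) = complex_of_real (a * X)"
    by (simp add: hx assms(3))
  moreover have "a * X \<noteq> 0"
    using assms a by (simp add: X_def)
  ultimately show "a *\<^sub>R x + b *\<^sub>R t \<noteq> 0"
    by (metis herm_zero_right of_real_eq_0_iff)
qed

lemma projection_off_spacelike_stays_timelike:
  assumes "Re (herm x x) > 0" "Re (herm u u) < 0"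
  obtains c where "herm x (u - c *s x) = 0" "Re (herm (u - c *s x) (u - c *s x)) < 0"
proof -
  define X where "X = Re (herm x x)"
  have hx: "herm x x = X"
    unfolding X_def by (rule herm_self_real)
  have "X > 0"
    using assms(1) by (simp add: X_def)
  define c where "c = herm x u / X"
  define t where "t = u - c *s x"
  have "herm x t = 0"
    using \<open>X > 0\<close> by (simp add: t_def c_def hx)
  then have "herm t x = 0"
    using herm_commute[of t x] by simp
  then have "herm t t = herm t u"
    by (simp add: t_def)
  also have "\<dots> = herm u u - cnj c * herm x u"
    by (simp add: t_def)
  also have "cnj c * herm x u = complex_of_real ((cmod (herm x u))\<^sup>2 / X)"
    by (simp add: c_def mult.commute) (metis complex_norm_square of_real_power)
  finally have "Re (herm t t) = Re (herm u u) - (cmod (herm x u))\<^sup>2 / X"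
    by simp
  also have "\<dots> < 0"
    using assms(2) \<open>X > 0\<close> by (smt (verit) divide_nonneg_pos zero_le_power2)
  finally show ?thesis
    using that \<open>herm x t = 0\<close> t_def by blast
qed

lemma smult_eq_scaleR_combination:
  "c *s v = Re c *\<^sub>R v + Im c *\<^sub>R (\<i> *s v)"
  by (simp add: vec_eq_iff complex_eq_iff)

lemma complex_line_eq_span: "complex_line v = span {v, \<i> *s v}"
proof (intro set_eqI iffI)
  fix z
  assume "z \<in> complex_line v"
  then obtain c where "z = Re c *\<^sub>R v + Im c *\<^sub>R (\<i> *s v)"
    using smult_eq_scaleR_combination by blast
  then show "z \<in> span {v, \<i> *s v}"
    by (simp add: span_add span_scale span_base)
next
  fix z
  assume "z \<in> span {v, \<i> *s v}"
  then obtain r s where "z - r *\<^sub>R v = s *\<^sub>R (\<i> *s v)"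
    by (auto simp: span_insert span_singleton)
  then have "z = Complex r s *s v"
    using smult_eq_scaleR_combination[of "Complex r s" v] by (simp add: algebra_simps)
  then show "z \<in> complex_line v"
    by blast
qed

lemma independent_complex_line_basis:
  assumes "v \<noteq> 0"
  shows "independent {v, \<i> *s v}" and "v \<noteq> \<i> *s v"
proof -
  have nonreal: "v \<noteq> (complex_of_real r * \<i>) *s v" for r
  proof
    assume "v = (complex_of_real r * \<i>) *s v"
    then have "(1 - complex_of_real r * \<i>) *s v = 0"
      by (simp add: vector_sub_rdistrib)
    moreover have "1 - complex_of_real r * \<i> \<noteq> 0"
      by (simp add: complex_eq_iff)
    ultimately show False
      using assms by (simp add: vec_eq_iff)
  qed
  show "v \<noteq> \<i> *s v"
    using nonreal[of 1] by simp
  have "v \<notin> span {\<i> *s v}"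
    using nonreal by (auto simp: span_singleton scaleR_eq_smult vector_smult_assoc)
  moreover have "\<i> *s v \<noteq> 0"
    using assms by (simp add: vec_eq_iff)
  ultimately show "independent {v, \<i> *s v}"
    by (simp add: independent_insert)
qed

lemma dim_complex_line: "v \<noteq> 0 \<Longrightarrow> dim (complex_line v) = 2"
  using independent_complex_line_basis[of v]
  by (simp add: complex_line_eq_span dim_eq_card_independent)

lemma LimitSet_eq: "LimitSet = {complex_line v | v. v \<noteq> 0 \<and> herm v v = 0}"
proof -
  have "(\<forall>a\<in>complex_line v. \<forall>b\<in>complex_line v. herm a b = 0) \<longleftrightarrow> herm v v = 0" for v :: "complex^('n::{finite,wellorder})"
    by (auto dest: bspec[of _ _ v] intro: range_eqI[of _ _ 1])
  then show ?thesis
    unfolding LimitSet_def complex_lines_def by blast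
qed

lemma complex_line_in_Iso2:
  assumes "v \<noteq> 0" "herm v v = 0"
  shows "complex_line v \<in> Iso2"
proof -
  have "subspace (complex_line v)"
    unfolding complex_line_eq_span by (rule subspace_span)
  moreover have "omega_isotropic (complex_line v)"
    using assms(2) by (auto simp: omega_isotropic_def omega_h_def)
  ultimately show ?thesis
    using dim_complex_line[OF assms(1)] by (simp add: Iso2_def)
qed

lemma omega_perp_complex_line: "omega_perp (complex_line y) = {u. herm u y = 0}"
proof -
  have "(\<forall>c. Im (herm u (c *s y)) = 0) \<longleftrightarrow> herm u y = 0" for u
  proof
    assume "\<forall>c. Im (herm u (c *s y)) = 0"
    from this[rule_format, of 1] this[rule_format, of \<i>] show "herm u y = 0"
      by (simp add: complex_eq_iff)
  qed simp
  then show ?thesis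
    by (auto simp: omega_perp_def omega_h_def)
qed

lemma antipodal_complex_lines:
  assumes "herm x y \<noteq> 0"
  shows "antipodal (complex_line x) (complex_line y)"
  unfolding antipodal_def direct_sum_UNIV_def omega_perp_complex_line
proof
  show "complex_line x \<inter> {u. herm u y = 0} = {0}"
    using assms by (auto intro: range_eqI[of _ _ 0])
  have "z \<in> {p + q |p q. p \<in> complex_line x \<and> q \<in> {u. herm u y = 0}}" for z
  proof -
    define c where "c = cnj (herm z y / herm x y)"
    have "herm (z - c *s x) y = 0"
      using assms by (simp add: c_def)
    then show ?thesis
      by (intro CollectI exI[of _ "c *s x"] exI[of _ "z - c *s x"]) auto
  qed
  then show "{p + q |p q. p \<in> complex_line x \<and> q \<in> {u. herm u y = 0}} = UNIV"
    by blast
qed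

lemma LimitSet_pairwise_antipodal:
  assumes "V \<in> LimitSet" "W \<in> LimitSet" "V \<noteq> W"
  shows "antipodal V W"
proof -
  obtain x y where x: "x \<noteq> 0" "herm x x = 0" "V = complex_line x"
    and y: "y \<noteq> 0" "herm y y = 0" "W = complex_line y"
    using assms(1,2) by (auto simp: LimitSet_eq)
  have "herm x y \<noteq> 0"
  proof
    assume "herm x y = 0"
    then obtain c where "x = c *s y"
      using null_orthogonal_imp_proportional x y by blast
    with x have "c \<noteq> 0"
      by auto
    with \<open>x = c *s y\<close> have "V = W"
      unfolding x y by (auto simp: vector_smult_assoc intro: range_eqI[of _ _ "_ / c"])
    with assms(3) show False ..
  qed
  then show ?thesis
    unfolding x y by (rule antipodal_complex_lines)
qed

lemma not_antipodal_LimitSet_if_null_orthogonal: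
  assumes "p \<in> V" "p \<noteq> 0" "w \<noteq> 0" "herm w w = 0" "herm p w = 0"
  shows "\<exists>W\<in>LimitSet. \<not> antipodal V W"
proof
  show "complex_line w \<in> LimitSet"
    using assms(3,4) by (auto simp: LimitSet_eq)
  show "\<not> antipodal V (complex_line w)"
    using assms(1,2,5) by (auto simp: antipodal_def direct_sum_UNIV_def omega_perp_complex_line)
qed

lemma not_antipodal_LimitSet_if_timelike_orthogonal_pair:
  assumes "subspace V" "t \<in> V" "x \<in> V" "x \<noteq> 0" "Re (herm t t) < 0" "herm t x = 0"
  shows "\<exists>W\<in>LimitSet. \<not> antipodal V W"
proof -
  have "Re (herm x x) > 0"
    using orthogonal_to_timelike_imp_spacelike assms(4-6) by blast
  moreover have "herm x t = 0"
    using assms(6) herm_commute[of x t] by simp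
  ultimately obtain a b :: real where w: "a *\<^sub>R x + b *\<^sub>R t \<noteq> 0"
    "herm (a *\<^sub>R x + b *\<^sub>R t) (a *\<^sub>R x + b *\<^sub>R t) = 0"
    using null_combination assms(5) by blast
  moreover have "a *\<^sub>R x + b *\<^sub>R t \<in> V"
    using assms(1-3) by (simp add: subspace_add subspace_scale)
  ultimately show ?thesis
    using not_antipodal_LimitSet_if_null_orthogonal by blast
qed

text \<open>Projecting a timelike vector \<open>h\<close>-orthogonally off \<open>v\<close> and then off \<open>x\<close> keeps it timelike;
  combined with \<open>x\<close> it yields the null vector.\<close>

lemma null_orthogonal_to_spacelike_pair:
  assumes "CARD('n) \<ge> 2" "Re (herm v v) > 0" "Re (herm x x) > 0" "herm v x = 0"
  obtains w :: "complex^('n::{finite,wellorder})" where "w \<noteq> 0" "herm w w = 0" "herm v w = 0"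
proof -
  obtain u :: "complex^('n::{finite,wellorder})" where "Re (herm u u) < 0"
    using exists_timelike assms(1) by blast
  then obtain c where c: "herm v (u - c *s v) = 0" "Re (herm (u - c *s v) (u - c *s v)) < 0"
    using projection_off_spacelike_stays_timelike assms(2) by blast
  then obtain d where d: "herm x (u - c *s v - d *s x) = 0"
    "Re (herm (u - c *s v - d *s x) (u - c *s v - d *s x)) < 0"
    using projection_off_spacelike_stays_timelike assms(3) by blast
  have "herm v (u - c *s v - d *s x) = 0"
    using c(1) assms(4) by simp
  from null_combination[OF assms(3) d(2,1)] obtain a b :: real where
    "a *\<^sub>R x + b *\<^sub>R (u - c *s v - d *s x) \<noteq> 0"
    "herm (a *\<^sub>R x + b *\<^sub>R (u - c *s v - d *s x)) (a *\<^sub>R x + b *\<^sub>R (u - c *s v - d *s x)) = 0" .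
  moreover have "herm v (a *\<^sub>R x + b *\<^sub>R (u - c *s v - d *s x)) = 0"
    using assms(4) \<open>herm v (u - c *s v - d *s x) = 0\<close> by simp
  ultimately show ?thesis
    using that by blast
qed

lemma not_antipodal_LimitSet_if_orthogonal_pair:
  assumes "CARD('n) \<ge> 2" "subspace V" "v \<in> V" "x \<in> V" "v \<noteq> 0" "x \<noteq> 0" "herm v x = 0"
  shows "\<exists>W\<in>LimitSet. \<not> antipodal (V :: (complex^('n::{finite,wellorder})) set) W"
proof -
  have "herm x v = 0"
    using assms(7) herm_commute[of x v] by simp
  consider "Re (herm v v) < 0" | "Re (herm x x) < 0" | "herm v v = 0" | "herm x x = 0"
    | "Re (herm v v) > 0" "Re (herm x x) > 0"
    using herm_self_real[of v] herm_self_real[of x] by (metis linorder_neqE_linordered_idom of_real_0)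
  then show ?thesis
  proof cases
    case 1
    with assms \<open>herm v x = 0\<close> show ?thesis
      by (intro not_antipodal_LimitSet_if_timelike_orthogonal_pair[of V v x]) auto
  next
    case 2
    with assms \<open>herm x v = 0\<close> show ?thesis
      by (intro not_antipodal_LimitSet_if_timelike_orthogonal_pair[of V x v]) auto
  next
    case 3
    with assms(3,5) show ?thesis
      by (intro not_antipodal_LimitSet_if_null_orthogonal) auto
  next
    case 4
    with assms(4,6) show ?thesis
      by (intro not_antipodal_LimitSet_if_null_orthogonal) auto
  next
    case 5
    then obtain w where "w \<noteq> 0" "herm w w = 0" "herm v w = 0"
      using null_orthogonal_to_spacelike_pair assms(1,7) by blast
    with assms(3,5) show ?thesis
      using not_antipodal_LimitSet_if_null_orthogonal by blast
  qed
qed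

lemma Iso2_not_antipodal_LimitSet:
  assumes "CARD('n) \<ge> 2" "V \<in> (Iso2 :: (complex^('n::{finite,wellorder})) set set)"
  shows "\<exists>W\<in>LimitSet. \<not> antipodal V W"
proof -
  have V: "subspace V" and "dim V = 2" and iso: "omega_isotropic V"
    using assms(2) by (auto simp: Iso2_def)
  obtain B where B: "B \<subseteq> V" "independent B" "card B = 2"
    using basis_exists[of V] \<open>dim V = 2\<close> by metis
  then obtain a b where "B = {a, b}" "a \<noteq> b"
    by (auto simp: card_2_iff)
  have "independent {b, a}"
    using B(2) \<open>B = {a, b}\<close> by (simp add: insert_commute)
  with B \<open>B = {a, b}\<close> \<open>a \<noteq> b\<close> have ab: "a \<in> V" "b \<in> V" "a \<noteq> 0" "b \<notin> span {a}"
    using dependent_zero[of B] by (auto simp: independent_insert)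
  txt \<open>Isotropy makes \<open>h\<close> real on \<open>V\<close>, so Gram--Schmidt applies to \<open>a, b\<close>.\<close>
  define A where "A = Re (herm a a)"
  define H where "H = Re (herm a b)"
  have ha: "herm a a = A"
    unfolding A_def by (rule herm_self_real)
  have hab: "herm a b = H"
    using iso ab(1,2) by (simp add: H_def omega_isotropic_def omega_h_def complex_eq_iff)
  show ?thesis
  proof (cases "A = 0")
    case True
    with ab ha show ?thesis
      using not_antipodal_LimitSet_if_null_orthogonal by auto
  next
    case False
    define y where "y = b - (H / A) *\<^sub>R a"
    have "y \<in> V"
      unfolding y_def using V ab by (simp add: subspace_diff subspace_scale)
    moreover have "y \<noteq> 0"
      using ab(4) span_base span_scale unfolding y_def by force
    moreover have "herm a y = 0"
      using False by (simp add: y_def hab ha)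
    ultimately show ?thesis
      using not_antipodal_LimitSet_if_orthogonal_pair[OF assms(1) V ab(1)] ab(3) by blast
  qed
qed

theorem mainTheorem15:
  assumes "CARD('n::{finite,wellorder}) \<ge> 2"
  shows "maximally_antipodal (Iso2 :: (complex^('n::{finite,wellorder})) set set) LimitSet"
  unfolding maximally_antipodal_def
proof (intro conjI ballI impI)
  show "LimitSet \<subseteq> (Iso2 :: (complex^('n::{finite,wellorder})) set set)"
    using complex_line_in_Iso2 by (auto simp: LimitSet_eq)
  show "antipodal V W" if "V \<in> LimitSet" "W \<in> LimitSet" "V \<noteq> W" for V W :: "(complex^('n::{finite,wellorder})) set"
    using LimitSet_pairwise_antipodal that .
  show "\<exists>W\<in>LimitSet. \<not> antipodal V W" if "V \<in> Iso2" for V :: "(complex^('n::{finite,wellorder})) set"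
    using Iso2_not_antipodal_LimitSet assms that .
qed

end
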